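(* In the setting described in the context, suppose $p_j(\theta)>0$ for all $j$ and all $\theta\in\Theta$. Then $H_\theta=C_\Upsilon(\theta)$ for all $\theta\in\Theta$ if and only if the channel is quasi-classical, i.e. the vectors $|w_k(\theta)\rangle$ do not depend on $\theta$.
   Context: Let $\Theta\subseteq\mathbb{R}$ be an open interval and $D\ge1$. For $\theta\in\Theta$ let $\Phi_\theta$ be a quantum channel on $D\times D$ complex matrices and $\rho_0=|\psi_0\rangle\langle\psi_0|$ a fixed pure input state. Canonical Kraus operators are $D\times D$ matrices $\Upsilon_1(\theta),\dots,\Upsilon_D(\theta)$, differentiable in $\theta$, with $\sum_k\Upsilon_k^\dagger\Upsilon_k=\mathbb{I}$, $\Phi_\theta(\rho)=\sum_k\Upsilon_k\rho\Upsilon_k^\dagger$, and $\mathrm{tr}\{\Upsilon_k\rho_0\Upsilon_j^\dagger\}=\delta_{jk}p_k(\theta)$. Write $\Upsilon_k(\theta)|\psi_0\rangle=\sqrt{p_k(\theta)}|w_k(\theta)\rangle$ with $\{|w_k(\theta)\rangle\}$ an orthonormal basis of $\mathbb{C}^D$ differentiable in $\theta$; the output is $\rho_\theta=\sum_kp_k|w_k\rangle\langle w_k|$. Primes denote $d/d\theta$. $C_\Upsilon(\theta)=4\sum_k\mathrm{tr}\{\Upsilon_k'\rho_0\Upsilon_k'^\dagger\}$, and $H_\theta=\mathrm{tr}\{\rho_\theta\lambda^2\}$ is the SLD quantum information, $\lambda$ any Hermitian solution of $d\rho_\theta/d\theta=\frac12(\rho_\theta\lambda+\lambda\rho_\theta)$.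 *)

theory Defs
  imports "HOL-Analysis.Analysis"
begin

text \<open>D x D complex matrices are modelled as complex^'n^'n with D = CARD('n).\<close>

definition cadj :: "complex^'n^'m \<Rightarrow> complex^'m^'n" where
  "cadj A = (\<chi> i j. cnj (A $ j $ i))"

definition cinner :: "complex^'n \<Rightarrow> complex^'n \<Rightarrow> complex" where
  "cinner u v = (\<Sum>i\<in>UNIV. cnj (u $ i) * v $ i)"

definition ket_bra :: "complex^'n \<Rightarrow> complex^'n \<Rightarrow> complex^'n^'n" where
  "ket_bra u v = (\<chi> i j. u $ i * cnj (v $ j))"

definition hermitian :: "complex^'n^'n \<Rightarrow> bool" where
  "hermitian A \<longleftrightarrow> cadj A = A"

definition is_SLD :: "complex^'n^'n \<Rightarrow> complex^'n^'n \<Rightarrow> complex^'n^'n \<Rightarrow> bool" where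
  "is_SLD rho drho L \<longleftrightarrow> hermitian L \<and> drho = (1/2) *\<^sub>R (rho ** L + L ** rho)"

definition SLD_info :: "complex^'n^'n \<Rightarrow> complex^'n^'n \<Rightarrow> complex" where
  "SLD_info rho drho = (let L = (SOME L. is_SLD rho drho L) in trace (rho ** (L ** L)))"

end

theory Submission
  imports Defs
begin

(* In the eigenbasis w of rho the SLD is unique, with matrix elements 2 <w_j|rho'|w_k> / (p_j + p_k).
   With g = sqrt p and the anti-Hermitian matrix a_jk = <w_j|w_k'>, one finds
   <w_j|rho'|w_k> = \<delta>_jk p_k' + (p_k - p_j) a_jk  and  <w_j|Y_k' psi0> = \<delta>_jk g_k' + g_k a_jk,
   so that comparing term by term  C - H = \<Sum>_jk 16 p_j p_k^2 / (p_j + p_k)^2 |a_jk|^2.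
   Hence C = H exactly when all w_k' vanish, i.e. when the w_k are constant on the interval. *)

lemma cinner_commute: "cinner u v = cnj (cinner v (u::complex^'n::finite))"
  by (simp add: cinner_def mult.commute)

lemma cinner_add_left: "cinner (u + v) (x::complex^'n::finite) = cinner u x + cinner v x"
  by (simp add: cinner_def distrib_right sum.distrib)

lemma cinner_add_right: "cinner (x::complex^'n::finite) (u + v) = cinner x u + cinner x v"
  by (simp add: cinner_def distrib_left sum.distrib)

lemma cinner_zero_right [simp]: "cinner (x::complex^'n::finite) 0 = 0"
  by (simp add: cinner_def)

lemma cinner_sum_right: "cinner (x::complex^'n::finite) (sum f S) = (\<Sum>i\<in>S. cinner x (f i))"
  by (induct S rule: infinite_finite_induct) (auto simp: cinner_add_right)

lemma cinner_scaleC_right: "cinner (x::complex^'n::finite) (c *s u) = c * cinner x u"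
  by (simp add: cinner_def sum_distrib_left algebra_simps)

lemma cinner_scaleR_left: "cinner (r *\<^sub>R u) (x::complex^'n::finite) = r *\<^sub>R cinner u x"
  by (simp add: cinner_def scaleR_sum_right)

lemma cinner_scaleR_right: "cinner (x::complex^'n::finite) (r *\<^sub>R u) = r *\<^sub>R cinner x u"
  by (simp add: cinner_def scaleR_sum_right)

lemma bounded_bilinear_cinner: "bounded_bilinear (cinner :: complex^'n::finite \<Rightarrow> _)"
  unfolding bilinear_conv_bounded_bilinear[symmetric] bilinear_def
  by (auto intro!: linearI simp: cinner_add_left cinner_add_right cinner_scaleR_left cinner_scaleR_right)

lemma ket_bra_add_left: "ket_bra (u + v) (x::complex^'n::finite) = ket_bra u x + ket_bra v x"
  by (simp add: ket_bra_def vec_eq_iff distrib_right)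

lemma ket_bra_add_right: "ket_bra x (u + v::complex^'n::finite) = ket_bra x u + ket_bra x v"
  by (simp add: ket_bra_def vec_eq_iff distrib_left)

lemma ket_bra_scaleR_left: "ket_bra (r *\<^sub>R u) (x::complex^'n::finite) = r *\<^sub>R ket_bra u x"
  by (simp add: ket_bra_def vec_eq_iff)

lemma ket_bra_scaleR_right: "ket_bra x (r *\<^sub>R u::complex^'n::finite) = r *\<^sub>R ket_bra x u"
  by (simp add: ket_bra_def vec_eq_iff)

lemma bounded_bilinear_ket_bra: "bounded_bilinear (ket_bra :: complex^'n::finite \<Rightarrow> _)"
  unfolding bilinear_conv_bounded_bilinear[symmetric] bilinear_def
  by (auto intro!: linearI simp: ket_bra_add_left ket_bra_add_right ket_bra_scaleR_left ket_bra_scaleR_right)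

lemma ket_bra_mult_vec: "ket_bra u v *v (x::complex^'n::finite) = cinner v x *s u"
  by (simp add: matrix_vector_mult_def ket_bra_def cinner_def vec_eq_iff sum_distrib_left algebra_simps)

lemma cinner_ket_bra_mult_vec: "cinner x (ket_bra u v *v y) = cinner v y * cinner x (u::complex^'n::finite)"
  by (simp add: ket_bra_mult_vec cinner_scaleC_right)

lemma matrix_mult_ket_bra: "(A::complex^'n::finite^'n) ** ket_bra u v = ket_bra (A *v u) v"
  by (simp add: matrix_matrix_mult_def matrix_vector_mult_def ket_bra_def vec_eq_iff
      sum_distrib_left ac_simps)

lemma ket_bra_mult_matrix: "ket_bra u v ** (A::complex^'n::finite^'n) = ket_bra u (cadj A *v v)"
  by (simp add: matrix_matrix_mult_def matrix_vector_mult_def ket_bra_def cadj_def vec_eq_iff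
      sum_distrib_left algebra_simps)

lemma trace_ket_bra: "trace (ket_bra u (v::complex^'n::finite)) = cinner v u"
  by (simp add: trace_def ket_bra_def cinner_def mult.commute)

lemma cadj_cadj [simp]: "cadj (cadj (A::complex^'n::finite^'m::finite)) = A"
  by (simp add: cadj_def vec_eq_iff)

lemma cinner_cadj_left: "cinner (cadj (A::complex^'n::finite^'n) *v x) y = cinner x (A *v y)"
proof -
  have "cinner (cadj A *v x) y = (\<Sum>i\<in>UNIV. \<Sum>j\<in>UNIV. A $ j $ i * cnj (x $ j) * y $ i)"
    by (simp add: cinner_def cadj_def matrix_vector_mult_def cnj_sum sum_distrib_right)
  also have "\<dots> = (\<Sum>j\<in>UNIV. \<Sum>i\<in>UNIV. A $ j $ i * cnj (x $ j) * y $ i)"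
    by (rule sum.swap)
  also have "\<dots> = cinner x (A *v y)"
    by (simp add: cinner_def matrix_vector_mult_def sum_distrib_left ac_simps)
  finally show ?thesis .
qed

lemma cinner_cadj_right: "cinner x (cadj (A::complex^'n::finite^'n) *v y) = cinner (A *v x) y"
  using cinner_cadj_left[of "cadj A" x y] by simp

lemma trace_sandwich_ket_bra:
  "trace ((A::complex^'n::finite^'n) ** ket_bra u u ** cadj A) = cinner (A *v u) (A *v u)"
  by (simp add: matrix_mult_ket_bra ket_bra_mult_matrix trace_ket_bra)

lemma trace_ket_bra_mult: "trace (ket_bra u v ** (A::complex^'n::finite^'n)) = cinner v (A *v u)"
  by (simp add: ket_bra_mult_matrix trace_ket_bra cinner_cadj_left)

lemma cadj_ket_bra: "cadj (ket_bra u (v::complex^'n::finite)) = ket_bra v u"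
  by (simp add: cadj_def ket_bra_def vec_eq_iff)

lemma cadj_add: "cadj (A + B :: complex^'n::finite^'m::finite) = cadj A + cadj B"
  by (simp add: cadj_def vec_eq_iff)

lemma cadj_scaleR: "cadj (r *\<^sub>R A :: complex^'n::finite^'m::finite) = r *\<^sub>R cadj A"
  by (simp add: cadj_def vec_eq_iff)

lemma cadj_sum: "cadj (sum f S :: complex^'n::finite^'m::finite) = (\<Sum>i\<in>S. cadj (f i))"
  by (induct S rule: infinite_finite_induct) (auto simp: cadj_add cadj_def vec_eq_iff)

lemma scalar_mult_of_real: "complex_of_real r *s (x::complex^'n) = r *\<^sub>R x"
  unfolding vec_eq_iff vector_scaleR_component by (simp add: scaleR_conv_of_real)

lemma matrix_vector_mult_scaleR_left: "(r *\<^sub>R (A::complex^'n::finite^'m)) *v x = r *\<^sub>R (A *v x)"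
  by (simp add: matrix_vector_mult_def vec_eq_iff scaleR_sum_right)

lemma matrix_vector_mult_scaleR_right: "(A::complex^'n::finite^'m) *v (r *\<^sub>R x) = r *\<^sub>R (A *v x)"
  by (simp add: matrix_vector_mult_def vec_eq_iff scaleR_sum_right)

lemma matrix_vector_mult_sum_left:
  "sum f S *v (x::complex^'n::finite) = (\<Sum>i\<in>S. (f i :: complex^'n^'m::finite) *v x)"
  by (induct S rule: infinite_finite_induct) (auto simp: matrix_vector_mult_add_rdistrib)

lemma bounded_linear_matrix_vector_mult_left:
  "bounded_linear (\<lambda>A::complex^'n::finite^'m::finite. A *v x)"
  unfolding linear_conv_bounded_linear[symmetric]
  by (auto intro!: linearI simp: matrix_vector_mult_add_rdistrib matrix_vector_mult_scaleR_left)

lemma trace_sum_mult: "trace (sum f S ** (A::complex^'n::finite^'n)) = (\<Sum>i\<in>S. trace (f i ** A))"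
  by (induct S rule: infinite_finite_induct)
     (auto simp: trace_def matrix_matrix_mult_def distrib_right sum.distrib)

lemma trace_scaleR_mult: "trace ((r *\<^sub>R A) ** (B::complex^'n::finite^'n)) = r *\<^sub>R trace (A ** B)"
  by (simp add: trace_def matrix_matrix_mult_def scaleR_sum_right)

definition orthonormal_family :: "('i \<Rightarrow> complex^'n::finite) \<Rightarrow> bool" where
  "orthonormal_family w \<longleftrightarrow> (\<forall>j k. cinner (w j) (w k) = (if j = k then 1 else 0))"

lemma orthonormal_family_cinner:
  "orthonormal_family w \<Longrightarrow> cinner (w j) (w k) = (if j = k then 1 else 0)"
  by (simp add: orthonormal_family_def)

(* CARD('n) orthonormal vectors span: their matrix is unitary, so its adjoint is also a right inverse. *)
lemma orthonormal_family_expansion: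
  fixes w :: "'n::finite \<Rightarrow> complex^'n"
  assumes "orthonormal_family w"
  shows "v = (\<Sum>j\<in>UNIV. cinner (w j) v *s w j)"
proof -
  define W :: "complex^'n^'n" where "W = (\<chi> i k. w k $ i)"
  have "cadj W ** W = mat 1"
    using assms by (simp add: orthonormal_family_def W_def cadj_def matrix_matrix_mult_def mat_def
        vec_eq_iff cinner_def)
  then have "W ** cadj W = mat 1"
    by (simp add: matrix_left_right_inverse)
  then have completeness: "(\<Sum>j\<in>UNIV. w j $ i * cnj (w j $ n)) = (if i = n then 1 else 0)" for i n
    by (simp add: W_def cadj_def matrix_matrix_mult_def mat_def vec_eq_iff)
  have "(\<Sum>j\<in>UNIV. cinner (w j) v *s w j) $ i = v $ i" for i
  proof -
    have "(\<Sum>j\<in>UNIV. cinner (w j) v *s w j) $ i = (\<Sum>j\<in>UNIV. \<Sum>n\<in>UNIV. w j $ i * cnj (w j $ n) * v $ n)"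
      by (simp add: sum_component cinner_def sum_distrib_left sum_distrib_right ac_simps)
    also have "\<dots> = (\<Sum>n\<in>UNIV. (\<Sum>j\<in>UNIV. w j $ i * cnj (w j $ n)) * v $ n)"
      by (subst sum.swap) (simp add: sum_distrib_right)
    also have "\<dots> = (\<Sum>n\<in>UNIV. if i = n then v $ n else 0)"
      by (rule sum.cong) (simp_all add: completeness)
    also have "\<dots> = v $ i"
      by simp
    finally show ?thesis .
  qed
  then show ?thesis
    by (simp add: vec_eq_iff)
qed

lemma orthonormal_family_eq_0_iff:
  fixes w :: "'n::finite \<Rightarrow> complex^'n"
  assumes "orthonormal_family w"
  shows "v = 0 \<longleftrightarrow> (\<forall>j. cinner (w j) v = 0)"
proof
  assume "\<forall>j. cinner (w j) v = 0"
  then have "(\<Sum>j\<in>UNIV. cinner (w j) v *s w j) = 0"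
    by simp
  with orthonormal_family_expansion[OF assms] show "v = 0"
    by (rule trans)
qed simp

lemma orthonormal_family_parseval:
  fixes w :: "'n::finite \<Rightarrow> complex^'n"
  assumes "orthonormal_family w"
  shows "cinner v v = of_real (\<Sum>j\<in>UNIV. (cmod (cinner (w j) v))\<^sup>2)"
proof -
  have "cinner v v = cinner v (\<Sum>j\<in>UNIV. cinner (w j) v *s w j)"
    by (subst orthonormal_family_expansion[OF assms, of v]) (rule refl)
  also have "\<dots> = (\<Sum>j\<in>UNIV. cinner (w j) v * cnj (cinner (w j) v))"
    by (simp add: cinner_sum_right cinner_scaleC_right cinner_commute[of v])
  finally show ?thesis
    by (simp add: complex_norm_square del: of_real_power)
qed

lemma orthonormal_family_matrix_eqI:
  fixes w :: "'n::finite \<Rightarrow> complex^'n" and A B :: "complex^'n^'n"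
  assumes "orthonormal_family w" and "\<And>j k. cinner (w j) (A *v w k) = cinner (w j) (B *v w k)"
  shows "A = B"
proof -
  have on_basis: "A *v w k = B *v w k" for k
  proof -
    have "A *v w k = (\<Sum>j\<in>UNIV. cinner (w j) (A *v w k) *s w j)"
      by (rule orthonormal_family_expansion[OF assms(1)])
    also have "\<dots> = (\<Sum>j\<in>UNIV. cinner (w j) (B *v w k) *s w j)"
      by (simp only: assms(2))
    also have "\<dots> = B *v w k"
      by (rule orthonormal_family_expansion[OF assms(1), symmetric])
    finally show ?thesis .
  qed
  have lincomb: "M *v x = (\<Sum>k\<in>UNIV. cinner (w k) x *s (M *v w k))" for M :: "complex^'n^'n" and x
  proof -
    have "M *v x = M *v (\<Sum>k\<in>UNIV. cinner (w k) x *s w k)"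
      by (rule arg_cong[OF orthonormal_family_expansion[OF assms(1)]])
    then show ?thesis
      by (simp only: vec.sum vec.scale)
  qed
  have "A *v x = B *v x" for x
    using lincomb[of A x] lincomb[of B x] by (simp only: on_basis)
  then show ?thesis
    by (simp add: matrix_eq)
qed

section \<open>The SLD information of a faithful state\<close>

definition spectral_density :: "('n::finite \<Rightarrow> complex^'n) \<Rightarrow> ('n \<Rightarrow> real) \<Rightarrow> complex^'n^'n" where
  "spectral_density w p = (\<Sum>k\<in>UNIV. p k *\<^sub>R ket_bra (w k) (w k))"

lemma spectral_density_eigenvector:
  assumes "orthonormal_family w"
  shows "spectral_density w p *v w k = p k *\<^sub>R w k"
  by (simp add: spectral_density_def matrix_vector_mult_sum_left matrix_vector_mult_scaleR_left
      ket_bra_mult_vec orthonormal_family_cinner[OF assms] if_distrib if_distribR cong: if_cong)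

lemma cinner_spectral_density:
  assumes "orthonormal_family w"
  shows "cinner (w j) (spectral_density w p *v x) = p j *\<^sub>R cinner (w j) x"
  by (simp add: spectral_density_def matrix_vector_mult_sum_left matrix_vector_mult_scaleR_left
      ket_bra_mult_vec cinner_sum_right cinner_scaleR_right cinner_scaleC_right
      orthonormal_family_cinner[OF assms] if_distrib if_distribR cong: if_cong)

lemma trace_spectral_density_mult:
  "trace (spectral_density w p ** A) = (\<Sum>k\<in>UNIV. p k *\<^sub>R cinner (w k) (A *v w k))"
  by (simp add: spectral_density_def trace_sum_mult trace_scaleR_mult trace_ket_bra_mult)

lemma cinner_anticommutator_spectral_density:
  assumes "orthonormal_family w"
  shows "cinner (w j) ((spectral_density w p ** L + L ** spectral_density w p) *v w k)
    = (p j + p k) *\<^sub>R cinner (w j) (L *v w k)"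
  by (simp add: matrix_vector_mult_add_rdistrib matrix_vector_mul_assoc[symmetric]
      spectral_density_eigenvector[OF assms] cinner_spectral_density[OF assms]
      cinner_add_right cinner_scaleR_right matrix_vector_mult_scaleR_right scaleR_add_left)

lemma hermitian_cinner_commute:
  "hermitian A \<Longrightarrow> cnj (cinner u (A *v v)) = cinner v (A *v (u::complex^'n::finite))"
  by (metis cinner_commute cinner_cadj_left hermitian_def)

lemma is_SLD_spectral_density_coeff:
  assumes "orthonormal_family w" and "p j + p k \<noteq> 0" and "is_SLD (spectral_density w p) D L"
  shows "cinner (w j) (L *v w k) = 2 * cinner (w j) (D *v w k) / of_real (p j + p k)"
proof -
  have "cinner (w j) (D *v w k) = (1/2 * (p j + p k)) *\<^sub>R cinner (w j) (L *v w k)"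
    using assms(3) by (simp add: is_SLD_def matrix_vector_mult_scaleR_left cinner_scaleR_right
        cinner_anticommutator_spectral_density[OF assms(1)])
  moreover have "complex_of_real (p j) + complex_of_real (p k) \<noteq> 0"
    using assms(2) by (metis of_real_add of_real_eq_0_iff)
  ultimately show ?thesis
    by (simp add: scaleR_conv_of_real field_simps)
qed

lemma is_SLD_spectral_density_exists:
  assumes on: "orthonormal_family w" and p_pos: "\<And>k. p k > 0" and "hermitian D"
  shows "\<exists>L. is_SLD (spectral_density w p) D L"
proof -
  define l where "l j k = 2 * cinner (w j) (D *v w k) / of_real (p j + p k)" for j k
  define L where "L = (\<Sum>j\<in>UNIV. \<Sum>k\<in>UNIV. ket_bra (l j k *s w j) (w k))"
  have L_coeff: "cinner (w j) (L *v w k) = l j k" for j k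
    by (simp add: L_def matrix_vector_mult_sum_left ket_bra_mult_vec cinner_sum_right
        cinner_scaleC_right orthonormal_family_cinner[OF on] if_distrib if_distribR cong: if_cong)
  have "hermitian L"
    unfolding hermitian_def
  proof (rule orthonormal_family_matrix_eqI[OF on])
    fix j k
    have "cinner (w j) (cadj L *v w k) = cnj (l k j)"
      by (simp add: cinner_cadj_right cinner_commute[of "L *v w j"] L_coeff)
    also have "\<dots> = l j k"
      using hermitian_cinner_commute[OF assms(3), of "w k" "w j"] by (simp add: l_def add.commute)
    finally show "cinner (w j) (cadj L *v w k) = cinner (w j) (L *v w k)"
      by (simp add: L_coeff)
  qed
  moreover have "D = (1/2) *\<^sub>R (spectral_density w p ** L + L ** spectral_density w p)"
  proof (rule orthonormal_family_matrix_eqI[OF on])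
    fix j k
    have "p j + p k \<noteq> 0"
      using p_pos[of j] p_pos[of k] by linarith
    then have "complex_of_real (p j + p k) \<noteq> 0"
      by (simp del: of_real_add)
    have "cinner (w j) ((1/2) *\<^sub>R (spectral_density w p ** L + L ** spectral_density w p) *v w k)
      = (1/2 * (p j + p k)) *\<^sub>R l j k"
      by (simp only: matrix_vector_mult_scaleR_left cinner_scaleR_right L_coeff
          cinner_anticommutator_spectral_density[OF on] scaleR_scaleR)
    also have "\<dots> = cinner (w j) (D *v w k)"
      using \<open>complex_of_real (p j + p k) \<noteq> 0\<close>
      by (simp add: l_def scaleR_conv_of_real field_simps del: of_real_add)
    finally show "cinner (w j) (D *v w k)
      = cinner (w j) ((1/2) *\<^sub>R (spectral_density w p ** L + L ** spectral_density w p) *v w k)" ..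
  qed
  ultimately show ?thesis
    unfolding is_SLD_def by blast
qed

(* The SOME in SLD_info is harmless: for a faithful state all SLDs have the same matrix
   elements in the eigenbasis. *)
lemma SLD_info_spectral_density:
  assumes on: "orthonormal_family w" and p_pos: "\<And>k. p k > 0" and "hermitian D"
  shows "SLD_info (spectral_density w p) D
    = of_real (\<Sum>k\<in>UNIV. \<Sum>j\<in>UNIV. 4 * p k * (cmod (cinner (w j) (D *v w k)))\<^sup>2 / (p j + p k)\<^sup>2)"
proof -
  define L where "L = (SOME L. is_SLD (spectral_density w p) D L)"
  have L: "is_SLD (spectral_density w p) D L"
    unfolding L_def using is_SLD_spectral_density_exists[OF assms] by (rule someI_ex)
  have "cinner (w k) ((L ** L) *v w k)
      = of_real (\<Sum>j\<in>UNIV. 4 * (cmod (cinner (w j) (D *v w k)))\<^sup>2 / (p j + p k)\<^sup>2)" for k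
  proof -
    have "p j + p k \<noteq> 0" for j
      using p_pos[of j] p_pos[of k] by linarith
    then have "cmod (cinner (w j) (L *v w k)) = 2 * cmod (cinner (w j) (D *v w k)) / (p j + p k)" for j
      using p_pos[of j] p_pos[of k]
      by (simp add: is_SLD_spectral_density_coeff[OF on _ L] norm_divide norm_mult del: of_real_add)
    moreover have "cinner (w k) ((L ** L) *v w k) = cinner (L *v w k) (L *v w k)"
      using L by (metis cinner_cadj_right hermitian_def is_SLD_def matrix_vector_mul_assoc)
    ultimately show ?thesis
      by (simp add: orthonormal_family_parseval[OF on] power_divide power_mult_distrib)
  qed
  then have "SLD_info (spectral_density w p) D
      = (\<Sum>k\<in>UNIV. of_real (p k * (\<Sum>j\<in>UNIV. 4 * (cmod (cinner (w j) (D *v w k)))\<^sup>2 / (p j + p k)\<^sup>2)))"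
    by (simp only: SLD_info_def Let_def L_def[symmetric] trace_spectral_density_mult
        scaleR_conv_of_real of_real_mult)
  also have "\<dots> = of_real (\<Sum>k\<in>UNIV. p k * (\<Sum>j\<in>UNIV. 4 * (cmod (cinner (w j) (D *v w k)))\<^sup>2 / (p j + p k)\<^sup>2))"
    by (rule of_real_sum[symmetric])
  also have "\<dots> = of_real (\<Sum>k\<in>UNIV. \<Sum>j\<in>UNIV. 4 * p k * (cmod (cinner (w j) (D *v w k)))\<^sup>2 / (p j + p k)\<^sup>2)"
    by (simp only: sum_distrib_left times_divide_eq_right ac_simps)
  finally show ?thesis .
qed

lemma vector_derivative_eq_0_iff_constant_on:
  fixes f :: "real \<Rightarrow> 'a::real_normed_vector"
  assumes "open S" "is_interval S" "\<And>x. x \<in> S \<Longrightarrow> f differentiable (at x)"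
  shows "(\<forall>x\<in>S. vector_derivative f (at x) = 0) \<longleftrightarrow> (\<forall>x\<in>S. \<forall>y\<in>S. f x = f y)"
proof
  assume deriv_0: "\<forall>x\<in>S. vector_derivative f (at x) = 0"
  have "\<exists>c. \<forall>x\<in>S. f x = c"
  proof (rule has_derivative_zero_constant[OF is_interval_convex[OF assms(2)]])
    fix x
    assume "x \<in> S"
    then have "(f has_vector_derivative vector_derivative f (at x)) (at x)"
      by (intro vector_derivative_works[THEN iffD1] assms(3))
    with deriv_0 \<open>x \<in> S\<close> have "(f has_vector_derivative 0) (at x)"
      by simp
    then show "(f has_derivative (\<lambda>h. 0)) (at x within S)"
      by (simp add: has_vector_derivative_def has_derivative_at_withinI)
  qed
  then show "\<forall>x\<in>S. \<forall>y\<in>S. f x = f y"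
    by auto
next
  assume const: "\<forall>x\<in>S. \<forall>y\<in>S. f x = f y"
  show "\<forall>x\<in>S. vector_derivative f (at x) = 0"
  proof
    fix x
    assume "x \<in> S"
    have "((\<lambda>t. f x) has_vector_derivative 0) (at x)"
      by simp
    then have "(f has_vector_derivative 0) (at x)"
      by (rule has_vector_derivative_transform_within_open[OF _ assms(1) \<open>x \<in> S\<close>])
         (use const \<open>x \<in> S\<close> in blast)
    then show "vector_derivative f (at x) = 0"
      by (rule vector_derivative_at)
  qed
qed

definition spectral_density_deriv ::
  "('n::finite \<Rightarrow> complex^'n) \<Rightarrow> ('n \<Rightarrow> real) \<Rightarrow> ('n \<Rightarrow> complex^'n) \<Rightarrow> ('n \<Rightarrow> real) \<Rightarrow> complex^'n^'n"
  where "spectral_density_deriv w p w' p' =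
    (\<Sum>k\<in>UNIV. p k *\<^sub>R (ket_bra (w k) (w' k) + ket_bra (w' k) (w k)) + p' k *\<^sub>R ket_bra (w k) (w k))"

lemma spectral_density_has_vector_derivative:
  assumes "\<And>k. ((\<lambda>t. p t k) has_real_derivative p' k) (at \<theta>)"
    and "\<And>k. ((\<lambda>t. w t k) has_vector_derivative w' k) (at \<theta>)"
  shows "((\<lambda>t. spectral_density (w t) (p t)) has_vector_derivative
    spectral_density_deriv (w \<theta>) (p \<theta>) w' p') (at \<theta>)"
  unfolding spectral_density_def spectral_density_deriv_def
  by (intro has_vector_derivative_sum has_vector_derivative_scaleR assms
      bounded_bilinear.has_vector_derivative[OF bounded_bilinear_ket_bra])

lemma hermitian_spectral_density_deriv: "hermitian (spectral_density_deriv w p w' p')"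
  by (simp add: hermitian_def spectral_density_deriv_def cadj_sum cadj_add cadj_scaleR cadj_ket_bra
      add.commute)

lemma cinner_spectral_density_deriv:
  assumes "orthonormal_family w"
  shows "cinner (w j) (spectral_density_deriv w p w' p' *v w k)
    = (if j = k then of_real (p' k) else 0) + p k *\<^sub>R cinner (w j) (w' k) + p j *\<^sub>R cinner (w' j) (w k)"
proof -
  have "cinner (w j) (spectral_density_deriv w p w' p' *v w k)
    = (\<Sum>m\<in>UNIV. p m *\<^sub>R (cinner (w' m) (w k) * cinner (w j) (w m) + cinner (w m) (w k) * cinner (w j) (w' m))
        + p' m *\<^sub>R (cinner (w m) (w k) * cinner (w j) (w m)))"
    by (simp add: spectral_density_deriv_def matrix_vector_mult_sum_left matrix_vector_mult_add_rdistrib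
        matrix_vector_mult_scaleR_left cinner_sum_right cinner_add_right cinner_scaleR_right
        cinner_ket_bra_mult_vec)
  also have "\<dots> = (\<Sum>m\<in>UNIV. (if m = j then p j *\<^sub>R cinner (w' j) (w k) else 0)
      + (if m = k then p k *\<^sub>R cinner (w j) (w' k) else 0) + (if m = k \<and> j = k then of_real (p' k) else 0))"
    by (rule sum.cong) (auto simp: orthonormal_family_cinner[OF assms] scaleR_conv_of_real distrib_left)
  also have "\<dots> = (if j = k then of_real (p' k) else 0) + p k *\<^sub>R cinner (w j) (w' k) + p j *\<^sub>R cinner (w' j) (w k)"
    by (simp add: sum.distrib)
  finally show ?thesis .
qed

lemma orthonormal_family_derivative_skew:
  assumes "open S" "\<theta> \<in> S" "\<And>t. t \<in> S \<Longrightarrow> orthonormal_family (w t)"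
    and "\<And>k. ((\<lambda>t. w t k) has_vector_derivative w' k) (at \<theta>)"
  shows "cinner (w' j) (w \<theta> k) + cinner (w \<theta> j) (w' k) = 0"
proof -
  have "((\<lambda>t. cinner (w t j) (w t k)) has_vector_derivative
      cinner (w \<theta> j) (w' k) + cinner (w' j) (w \<theta> k)) (at \<theta>)"
    by (rule bounded_bilinear.has_vector_derivative[OF bounded_bilinear_cinner assms(4) assms(4)])
  moreover have "((\<lambda>t. cinner (w t j) (w t k)) has_vector_derivative 0) (at \<theta>)"
    by (rule has_vector_derivative_transform_within_open[OF _ assms(1,2), where f="\<lambda>t. if j = k then 1 else 0"])
       (simp_all add: assms(3) orthonormal_family_cinner)
  ultimately show ?thesis
    by (metis add.commute vector_derivative_unique_at)
qed

lemma has_vector_derivative_sqrt_weight: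
  fixes Y :: "real \<Rightarrow> complex^'n::finite^'n" and v :: "real \<Rightarrow> complex^'n"
  assumes "open S" "\<theta> \<in> S"
    and Y_v: "\<And>t. t \<in> S \<Longrightarrow> Y t *v \<psi> = complex_of_real (sqrt (p t)) *s v t"
    and v_unit: "\<And>t. t \<in> S \<Longrightarrow> cinner (v t) (v t) = 1"
    and Y': "(Y has_vector_derivative Y') (at \<theta>)" and v': "(v has_vector_derivative v') (at \<theta>)"
  obtains g' where "((\<lambda>t. sqrt (p t)) has_real_derivative g') (at \<theta>)"
    and "Y' *v \<psi> = g' *\<^sub>R v \<theta> + sqrt (p \<theta>) *\<^sub>R v'"
proof -
  have Y'_psi: "((\<lambda>t. Y t *v \<psi>) has_vector_derivative Y' *v \<psi>) (at \<theta>)"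
    by (rule bounded_linear.has_vector_derivative[OF bounded_linear_matrix_vector_mult_left Y'])
  \<comment> \<open>the weight is read off the Kraus operator as sqrt (p t) = Re (cinner (v t) (Y t *v \<psi>))\<close>
  define g' where "g' = Re (cinner (v \<theta>) (Y' *v \<psi>) + cinner v' (Y \<theta> *v \<psi>))"
  have "((\<lambda>t. Re (cinner (v t) (Y t *v \<psi>))) has_real_derivative g') (at \<theta>)"
    unfolding g'_def has_real_derivative_iff_has_vector_derivative
    by (intro bounded_linear.has_vector_derivative[OF bounded_linear_Re]
        bounded_bilinear.has_vector_derivative[OF bounded_bilinear_cinner v' Y'_psi])
  then have g': "((\<lambda>t. sqrt (p t)) has_real_derivative g') (at \<theta>)"
    by (rule has_field_derivative_transform_within_open[OF _ assms(1,2)])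
       (simp add: Y_v v_unit cinner_scaleC_right)
  have "((\<lambda>t. sqrt (p t) *\<^sub>R v t) has_vector_derivative sqrt (p \<theta>) *\<^sub>R v' + g' *\<^sub>R v \<theta>) (at \<theta>)"
    by (rule has_vector_derivative_scaleR[OF g' v'])
  then have "((\<lambda>t. Y t *v \<psi>) has_vector_derivative sqrt (p \<theta>) *\<^sub>R v' + g' *\<^sub>R v \<theta>) (at \<theta>)"
    by (rule has_vector_derivative_transform_within_open[OF _ assms(1,2)])
       (simp add: Y_v scalar_mult_of_real)
  then have "Y' *v \<psi> = g' *\<^sub>R v \<theta> + sqrt (p \<theta>) *\<^sub>R v'"
    using vector_derivative_unique_at[OF Y'_psi] by (simp add: add.commute)
  with g' show ?thesis
    by (rule that)
qed

section \<open>Comparison of the two informations\<close>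

definition Kraus_info :: "('n::finite \<Rightarrow> complex^'n^'n) \<Rightarrow> complex^'n \<Rightarrow> complex" where
  "Kraus_info Y' \<psi> = 4 * (\<Sum>k\<in>UNIV. trace (Y' k ** ket_bra \<psi> \<psi> ** cadj (Y' k)))"

lemma cmod_add_imaginary_power2:
  assumes "Re a = 0"
  shows "(cmod (of_real x + of_real y * a))\<^sup>2 = x\<^sup>2 + y\<^sup>2 * (cmod a)\<^sup>2"
  using assms by (simp add: cmod_power2 power_mult_distrib)

lemma SLD_info_eq_Kraus_info_iff:
  fixes w w' :: "'n::finite \<Rightarrow> complex^'n" and p g g' :: "'n \<Rightarrow> real"
    and Y' :: "'n \<Rightarrow> complex^'n^'n" and \<psi> :: "complex^'n"
  assumes on: "orthonormal_family w" and g_pos: "\<And>k. g k > 0" and p_g: "\<And>k. p k = (g k)\<^sup>2"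
    and skew: "\<And>j k. cinner (w' j) (w k) + cinner (w j) (w' k) = 0"
    and Y'_psi: "\<And>k. Y' k *v \<psi> = g' k *\<^sub>R w k + g k *\<^sub>R w' k"
  shows "SLD_info (spectral_density w p) (spectral_density_deriv w p w' (\<lambda>k. 2 * g k * g' k))
      = Kraus_info Y' \<psi> \<longleftrightarrow> (\<forall>k. w' k = 0)" (is "?H = ?C \<longleftrightarrow> _")
proof -
  define a where "a j k = cinner (w j) (w' k)" for j k
  define d where "d j k = (if j = k then of_real (2 * g k * g' k) else 0) + of_real (p k - p j) * a j k" for j k
  define u where "u j k = (if j = k then of_real (g' k) else 0) + of_real (g k) * a j k" for j k
  define c where "c j k = 16 * p j * (p k)\<^sup>2 / (p j + p k)\<^sup>2" for j k
  have p_pos: "p k > 0" for k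
    using g_pos[of k] by (simp add: p_g)
  have a_skew: "cinner (w' j) (w k) = - a j k" for j k
    using skew[of j k] by (simp add: a_def eq_neg_iff_add_eq_0)
  have Re_a_diag: "Re (a k k) = 0" for k
    using a_skew[of k k] cinner_commute[of "w' k" "w k"] by (simp add: a_def complex_eq_iff)
  have D_coeff: "cinner (w j) (spectral_density_deriv w p w' (\<lambda>k. 2 * g k * g' k) *v w k) = d j k" for j k
    by (simp add: cinner_spectral_density_deriv[OF on] a_skew d_def a_def scaleR_conv_of_real
        algebra_simps)
  have Y'_coeff: "cinner (w j) (Y' k *v \<psi>) = u j k" for j k
    by (simp add: Y'_psi u_def a_def cinner_add_right cinner_scaleR_right orthonormal_family_cinner[OF on],
        simp add: scaleR_conv_of_real)
  have H: "?H = of_real (\<Sum>k\<in>UNIV. \<Sum>j\<in>UNIV. 4 * p k * (cmod (d j k))\<^sup>2 / (p j + p k)\<^sup>2)"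
    by (simp only: SLD_info_spectral_density[OF on p_pos hermitian_spectral_density_deriv] D_coeff)
  have C: "?C = of_real (\<Sum>k\<in>UNIV. \<Sum>j\<in>UNIV. 4 * (cmod (u j k))\<^sup>2)"
    by (simp add: Kraus_info_def trace_sandwich_ket_bra orthonormal_family_parseval[OF on] Y'_coeff
        sum_distrib_left)
  have gap: "4 * (cmod (u j k))\<^sup>2 - 4 * p k * (cmod (d j k))\<^sup>2 / (p j + p k)\<^sup>2 = c j k * (cmod (a j k))\<^sup>2"
    for j k
  proof (cases "j = k")
    case True
    have "(cmod (u k k))\<^sup>2 = (g' k)\<^sup>2 + p k * (cmod (a k k))\<^sup>2"
      by (simp add: u_def cmod_add_imaginary_power2[OF Re_a_diag] p_g)
    moreover have "(cmod (d k k))\<^sup>2 = 4 * p k * (g' k)\<^sup>2"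
      by (simp add: d_def p_g power_mult_distrib norm_mult del: of_real_mult)
    ultimately show ?thesis
      using True p_pos[of k] by (simp add: c_def field_simps power2_eq_square)
  next
    case False
    have "(cmod (u j k))\<^sup>2 = p k * (cmod (a j k))\<^sup>2"
      using False g_pos[of k] by (simp add: u_def p_g norm_mult power_mult_distrib)
    moreover have "(cmod (d j k))\<^sup>2 = (p k - p j)\<^sup>2 * (cmod (a j k))\<^sup>2"
      using False by (simp add: d_def norm_mult power_mult_distrib del: of_real_diff)
    moreover have "(p j + p k)\<^sup>2 - (p k - p j)\<^sup>2 = 4 * p j * p k"
      by (simp add: power2_eq_square algebra_simps)
    ultimately show ?thesis
      using p_pos[of j] p_pos[of k] by (simp add: c_def divide_simps) (simp add: algebra_simps power2_eq_square)
  qed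
  have gap_sum: "?C - ?H = of_real (\<Sum>k\<in>UNIV. \<Sum>j\<in>UNIV. c j k * (cmod (a j k))\<^sup>2)"
    by (simp only: H C gap of_real_diff[symmetric] sum_subtractf[symmetric])
  have c_pos: "c j k > 0" for j k
    using p_pos[of j] p_pos[of k] by (simp add: c_def)
  have "?H = ?C \<longleftrightarrow> ?C - ?H = 0"
    by (subst eq_commute) (rule eq_iff_diff_eq_0)
  also have "\<dots> \<longleftrightarrow> (\<Sum>k\<in>UNIV. \<Sum>j\<in>UNIV. c j k * (cmod (a j k))\<^sup>2) = 0"
    unfolding gap_sum by (rule of_real_eq_0_iff)
  also have "\<dots> \<longleftrightarrow> (\<forall>k j. c j k * (cmod (a j k))\<^sup>2 = 0)"
    using c_pos by (simp add: sum_nonneg_eq_0_iff sum_nonneg less_imp_le)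
  also have "\<dots> \<longleftrightarrow> (\<forall>k j. a j k = 0)"
    using c_pos by (simp add: less_imp_neq[symmetric])
  also have "\<dots> \<longleftrightarrow> (\<forall>k. w' k = 0)"
    by (simp add: a_def orthonormal_family_eq_0_iff[OF on])
  finally show ?thesis .
qed

lemma SLD_info_eq_Kraus_info_iff_vector_derivative_eq_0:
  fixes Y :: "real \<Rightarrow> 'n::finite \<Rightarrow> complex^'n^'n" and w :: "real \<Rightarrow> 'n \<Rightarrow> complex^'n"
  assumes "open S" "\<theta> \<in> S"
    and Y_diff: "\<And>k. (\<lambda>t. Y t k) differentiable (at \<theta>)"
    and Y_w: "\<And>t k. t \<in> S \<Longrightarrow> Y t k *v \<psi> = complex_of_real (sqrt (p t k)) *s w t k"
    and w_onb: "\<And>t. t \<in> S \<Longrightarrow> orthonormal_family (w t)"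
    and w_diff: "\<And>k. (\<lambda>t. w t k) differentiable (at \<theta>)"
    and p_pos: "\<And>t k. t \<in> S \<Longrightarrow> p t k > 0"
  shows "SLD_info (spectral_density (w \<theta>) (p \<theta>))
      (vector_derivative (\<lambda>t. spectral_density (w t) (p t)) (at \<theta>))
    = Kraus_info (\<lambda>k. vector_derivative (\<lambda>t. Y t k) (at \<theta>)) \<psi>
    \<longleftrightarrow> (\<forall>k. vector_derivative (\<lambda>t. w t k) (at \<theta>) = 0)"
proof -
  define Y' where "Y' k = vector_derivative (\<lambda>t. Y t k) (at \<theta>)" for k
  define w' where "w' k = vector_derivative (\<lambda>t. w t k) (at \<theta>)" for k
  have Y': "((\<lambda>t. Y t k) has_vector_derivative Y' k) (at \<theta>)" for k
    unfolding Y'_def by (rule vector_derivative_works[THEN iffD1, OF Y_diff])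
  have w': "((\<lambda>t. w t k) has_vector_derivative w' k) (at \<theta>)" for k
    unfolding w'_def by (rule vector_derivative_works[THEN iffD1, OF w_diff])
  have "\<exists>g'. ((\<lambda>t. sqrt (p t k)) has_real_derivative g') (at \<theta>)
      \<and> Y' k *v \<psi> = g' *\<^sub>R w \<theta> k + sqrt (p \<theta> k) *\<^sub>R w' k" for k
    by (rule has_vector_derivative_sqrt_weight[OF assms(1,2) Y_w _ Y' w'])
       (auto simp: w_onb orthonormal_family_cinner)
  then obtain g' where g': "\<And>k. ((\<lambda>t. sqrt (p t k)) has_real_derivative g' k) (at \<theta>)"
    and Y'_psi: "\<And>k. Y' k *v \<psi> = g' k *\<^sub>R w \<theta> k + sqrt (p \<theta> k) *\<^sub>R w' k"
    by metis
  have "((\<lambda>t. p t k) has_real_derivative 2 * sqrt (p \<theta> k) * g' k) (at \<theta>)" for k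
  proof -
    have "((\<lambda>t. sqrt (p t k) * sqrt (p t k)) has_real_derivative 2 * sqrt (p \<theta> k) * g' k) (at \<theta>)"
      using DERIV_mult[OF g' g', of k k] by (simp add: algebra_simps)
    then show ?thesis
      by (rule has_field_derivative_transform_within_open[OF _ assms(1,2)])
         (simp add: p_pos less_imp_le)
  qed
  then have rho': "vector_derivative (\<lambda>t. spectral_density (w t) (p t)) (at \<theta>)
      = spectral_density_deriv (w \<theta>) (p \<theta>) w' (\<lambda>k. 2 * sqrt (p \<theta> k) * g' k)"
    by (intro vector_derivative_at spectral_density_has_vector_derivative w')
  have "SLD_info (spectral_density (w \<theta>) (p \<theta>))
      (spectral_density_deriv (w \<theta>) (p \<theta>) w' (\<lambda>k. 2 * sqrt (p \<theta> k) * g' k))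
    = Kraus_info Y' \<psi> \<longleftrightarrow> (\<forall>k. w' k = 0)"
    by (rule SLD_info_eq_Kraus_info_iff[OF w_onb[OF assms(2)] _ _
          orthonormal_family_derivative_skew[OF assms(1,2) w_onb w'] Y'_psi])
       (simp_all add: p_pos[OF assms(2)] less_imp_le)
  then show ?thesis
    by (simp only: rho' Y'_def[abs_def] w'_def)
qed

theorem lemma2p4:
  fixes \<Theta> :: "real set"
    and Y :: "real \<Rightarrow> 'n::finite \<Rightarrow> complex^'n^'n"
    and psi0 :: "complex^'n"
    and p :: "real \<Rightarrow> 'n \<Rightarrow> real"
    and w :: "real \<Rightarrow> 'n \<Rightarrow> complex^'n"
  assumes Theta_open: "open \<Theta>" and Theta_interval: "is_interval \<Theta>" and Theta_ne: "\<Theta> \<noteq> {}"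
    and psi0_unit: "cinner psi0 psi0 = 1"
    and Y_diff: "\<And>\<theta> k. \<theta> \<in> \<Theta> \<Longrightarrow> (\<lambda>t. Y t k) differentiable (at \<theta>)"
    and Y_complete: "\<And>\<theta>. \<theta> \<in> \<Theta> \<Longrightarrow> (\<Sum>k\<in>UNIV. cadj (Y \<theta> k) ** Y \<theta> k) = mat 1"
    and Y_canonical: "\<And>\<theta> j k. \<theta> \<in> \<Theta> \<Longrightarrow>
        trace (Y \<theta> k ** ket_bra psi0 psi0 ** cadj (Y \<theta> j)) = (if j = k then complex_of_real (p \<theta> k) else 0)"
    and Y_w: "\<And>\<theta> k. \<theta> \<in> \<Theta> \<Longrightarrow> Y \<theta> k *v psi0 = complex_of_real (sqrt (p \<theta> k)) *s w \<theta> k"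
    and w_orthonormal: "\<And>\<theta> j k. \<theta> \<in> \<Theta> \<Longrightarrow> cinner (w \<theta> j) (w \<theta> k) = (if j = k then 1 else 0)"
    and w_diff: "\<And>\<theta> k. \<theta> \<in> \<Theta> \<Longrightarrow> (\<lambda>t. w t k) differentiable (at \<theta>)"
    and p_pos: "\<And>\<theta> j. \<theta> \<in> \<Theta> \<Longrightarrow> p \<theta> j > 0"
  shows "(\<forall>\<theta>\<in>\<Theta>.
            SLD_info (\<Sum>k\<in>UNIV. p \<theta> k *\<^sub>R ket_bra (w \<theta> k) (w \<theta> k))
                     (vector_derivative (\<lambda>t. \<Sum>k\<in>UNIV. p t k *\<^sub>R ket_bra (w t k) (w t k)) (at \<theta>))
            = 4 * (\<Sum>k\<in>UNIV. trace (vector_derivative (\<lambda>t. Y t k) (at \<theta>) ** ket_bra psi0 psi0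
                                        ** cadj (vector_derivative (\<lambda>t. Y t k) (at \<theta>)))))
         \<longleftrightarrow> (\<forall>k. \<forall>\<theta>1\<in>\<Theta>. \<forall>\<theta>2\<in>\<Theta>. w \<theta>1 k = w \<theta>2 k)"
proof -
  have pointwise: "SLD_info (spectral_density (w \<theta>) (p \<theta>))
        (vector_derivative (\<lambda>t. spectral_density (w t) (p t)) (at \<theta>))
      = Kraus_info (\<lambda>k. vector_derivative (\<lambda>t. Y t k) (at \<theta>)) psi0
    \<longleftrightarrow> (\<forall>k. vector_derivative (\<lambda>t. w t k) (at \<theta>) = 0)" if "\<theta> \<in> \<Theta>" for \<theta>
    by (rule SLD_info_eq_Kraus_info_iff_vector_derivative_eq_0[OF Theta_open that Y_diff[OF that] Y_w _
          w_diff[OF that] p_pos])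
       (simp_all add: orthonormal_family_def w_orthonormal)
  have constancy: "(\<forall>\<theta>\<in>\<Theta>. vector_derivative (\<lambda>t. w t k) (at \<theta>) = 0)
      \<longleftrightarrow> (\<forall>\<theta>1\<in>\<Theta>. \<forall>\<theta>2\<in>\<Theta>. w \<theta>1 k = w \<theta>2 k)" for k
    by (rule vector_derivative_eq_0_iff_constant_on[OF Theta_open Theta_interval w_diff])
  show ?thesis
    by (simp add: pointwise[unfolded spectral_density_def Kraus_info_def] flip: constancy) blast
qed

end
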